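(* $\lambda<-0.030$, where $$\lambda=\alpha(2)+\sum_{p\ \mathrm{prime}}\alpha(p)-\sum_{j\geq1}\frac1j\left((2\beta_j(2)-1)\prod_{p\geq3\ \mathrm{prime}}\beta_j(p)\right).$$
   Context: For a prime $p$ and an integer $j\geq1$, $\alpha(p)=\left(1-\frac1p\right)\sum_{m\geq1}\frac{1}{p^m}\log\left(1+\frac1p+\cdots+\frac1{p^m}\right)$ and $\beta_j(p)=\left(1-\frac1p\right)\sum_{m\geq0}\frac{1}{p^m}\left(1+\frac1p+\cdots+\frac1{p^m}\right)^{-j}$. (This $\lambda$ is the limit of $\frac1N\sum_{n=1}^N\log\frac{s(2n)}{2n}$, where $s(n)=\sigma(n)-n$ is the sum of the proper divisors of $n$.) *)

theory Defs
  imports "HOL-Analysis.Analysis" "HOL-Computational_Algebra.Primes"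
begin

definition geo_part :: "nat \<Rightarrow> nat \<Rightarrow> real" where
  "geo_part p m = (\<Sum>i\<le>m. 1 / real p ^ i)"

definition alpha :: "nat \<Rightarrow> real" where
  "alpha p = (1 - 1 / real p) * (\<Sum>m. 1 / real p ^ (Suc m) * ln (geo_part p (Suc m)))"

definition beta :: "nat \<Rightarrow> nat \<Rightarrow> real" where
  "beta j p = (1 - 1 / real p) * (\<Sum>m. 1 / real p ^ m * (geo_part p m) powi (- int j))"

definition lambda_const :: real where
  "lambda_const =
     alpha 2 + (\<Sum>p. if prime p then alpha p else 0)
     - (\<Sum>k. let j = Suc k in
          1 / real j * ((2 * beta j 2 - 1) * (\<Prod>p. if prime p \<and> p \<ge> 3 then beta j p else 1)))"

end

theory Submission
  imports Defs
begin

text \<open>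
  Every infinite object in \<open>\<lambda>\<close> is truncated with an explicit error bound. The series defining
  \<open>\<alpha>(p)\<close> and \<open>\<beta>\<^sub>j(p)\<close> have geometric tails, and the logarithms are majorised by the first
  terms of the expansion of \<open>ln ((1 + u) / (1 - u))\<close>. For large primes
  \<open>\<alpha>(p) \<le> 1 / (p (p - 1))\<close> and \<open>1 - \<beta>\<^sub>j(p) \<le> j / (p (p - 1))\<close>, so the primes above 29
  contribute at most a multiple of \<open>\<Sum>\<^sub>p 1 / (p (p - 1))\<close>, both to the sum over \<open>\<alpha>\<close> and,
  through \<open>\<Prod> x\<^sub>i \<ge> 1 - \<Sum> (1 - x\<^sub>i)\<close>, to the products over \<open>\<beta>\<^sub>j\<close>. The terms of the series
  over \<open>j\<close> are nonnegative, so dropping those with \<open>j > 14\<close> only increases \<open>\<lambda>\<close>. What remains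
  is a finite expression, evaluated in fixed-point integer arithmetic with every rounding
  going in the safe direction.
\<close>

lemma geo_part_0 [simp]: "geo_part p 0 = 1"
  by (simp add: geo_part_def)

lemma geo_part_eq:
  assumes "p \<ge> 2"
  shows "geo_part p m = (real p ^ Suc m - 1) / (real p ^ m * (real p - 1))"
proof (induction m)
  case 0
  then show ?case using assms by simp
next
  case (Suc m)
  have "real p ^ m > 0" "real p - 1 > 0" using assms by auto
  then show ?case
    using Suc by (simp add: geo_part_def divide_simps) (simp add: algebra_simps)
qed

lemma geo_part_ge_1: "geo_part p m \<ge> 1"
  unfolding geo_part_def by (rule order_trans[OF _ member_le_sum[of 0]]) auto

lemma geo_part_le:
  assumes "p \<ge> 2"
  shows "geo_part p m \<le> real p / (real p - 1)"
proof -
  have "geo_part p m \<le> real p ^ Suc m / (real p ^ m * (real p - 1))"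
    unfolding geo_part_eq[OF assms] using assms by (intro divide_right_mono) auto
  also have "\<dots> = real p / (real p - 1)"
    using assms by (simp add: field_simps)
  finally show ?thesis .
qed

lemma summable_geometric_majorant:
  fixes a :: "nat \<Rightarrow> real"
  assumes "\<And>m. 0 \<le> a m" "\<And>m. a m \<le> c * x ^ m" "0 \<le> x" "x < 1"
  shows "summable a"
  by (rule summable_comparison_test'[OF summable_mult[OF summable_geometric[of x]], of 0 _ c])
     (use assms in auto)

lemma geometric_tail_sums:
  fixes x :: real
  assumes "0 \<le> x" "x < 1"
  shows "(\<lambda>n. c * x ^ (n + M)) sums (c * x ^ M / (1 - x))"
  using sums_mult[OF geometric_sums[of x], of "c * x ^ M"] assms
  by (simp add: power_add mult_ac)

lemma suminf_le_geometric_tail: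
  fixes a :: "nat \<Rightarrow> real"
  assumes "summable a" "\<And>m. M \<le> m \<Longrightarrow> a m \<le> c * x ^ m" "0 \<le> x" "x < 1"
  shows "suminf a \<le> sum a {..<M} + c * x ^ M / (1 - x)"
proof -
  have "(\<Sum>n. a (n + M)) \<le> c * x ^ M / (1 - x)"
    by (rule sums_le[OF _ summable_sums[OF summable_ignore_initial_segment[OF assms(1)]]
          geometric_tail_sums]) (use assms in auto)
  then show ?thesis
    using suminf_split_initial_segment[OF assms(1), of M] by simp
qed

lemma suminf_ge_geometric_tail:
  fixes a :: "nat \<Rightarrow> real"
  assumes "summable a" "\<And>m. M \<le> m \<Longrightarrow> c * x ^ m \<le> a m" "0 \<le> x" "x < 1"
  shows "sum a {..<M} + c * x ^ M / (1 - x) \<le> suminf a"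
proof -
  have "c * x ^ M / (1 - x) \<le> (\<Sum>n. a (n + M))"
    by (rule sums_le[OF _ geometric_tail_sums
          summable_sums[OF summable_ignore_initial_segment[OF assms(1)]]]) (use assms in auto)
  then show ?thesis
    using suminf_split_initial_segment[OF assms(1), of M] by simp
qed

subsection \<open>The local factors \<open>\<alpha>(p)\<close> and \<open>\<beta>\<^sub>j(p)\<close>\<close>

lemma alpha_terms_bounds:
  assumes "p \<ge> 2"
  shows "0 \<le> 1 / real p ^ Suc m * ln (geo_part p (Suc m))"
    and "1 / real p ^ Suc m * ln (geo_part p (Suc m))
           \<le> ln (real p / (real p - 1)) / real p * (1 / real p) ^ m"
proof -
  have "0 \<le> ln (geo_part p (Suc m))" "ln (geo_part p (Suc m)) \<le> ln (real p / (real p - 1))"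
    using geo_part_ge_1[of p "Suc m"] geo_part_le[OF assms, of "Suc m"] by auto
  then show "0 \<le> 1 / real p ^ Suc m * ln (geo_part p (Suc m))"
    and "1 / real p ^ Suc m * ln (geo_part p (Suc m))
           \<le> ln (real p / (real p - 1)) / real p * (1 / real p) ^ m"
    using assms by (auto simp: power_one_over field_simps intro: divide_right_mono)
qed

lemma alpha_le_truncation:
  assumes "p \<ge> 2"
  shows "alpha p \<le> (1 - 1 / real p) * ((\<Sum>m<M. 1 / real p ^ Suc m * ln (geo_part p (Suc m)))
                      + ln (real p / (real p - 1)) / (real p ^ M * (real p - 1)))"
proof -
  define L where "L = ln (real p / (real p - 1))"
  have p: "real p \<ge> 2" using assms by simp
  have "summable (\<lambda>m. 1 / real p ^ Suc m * ln (geo_part p (Suc m)))"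
    by (rule summable_geometric_majorant[OF alpha_terms_bounds[OF assms]]) (use p in auto)
  from suminf_le_geometric_tail[OF this alpha_terms_bounds(2)[OF assms], of M]
  have "(\<Sum>m. 1 / real p ^ Suc m * ln (geo_part p (Suc m)))
          \<le> (\<Sum>m<M. 1 / real p ^ Suc m * ln (geo_part p (Suc m)))
             + L / real p * (1 / real p) ^ M / (1 - 1 / real p)"
    using p by (simp add: L_def)
  moreover have "1 - 1 / real p = (real p - 1) / real p"
    using p by (simp add: field_simps)
  then have "L / real p * (1 / real p) ^ M / (1 - 1 / real p) = L / (real p ^ M * (real p - 1))"
    using p by (simp add: power_one_over)
  ultimately have "(\<Sum>m. 1 / real p ^ Suc m * ln (geo_part p (Suc m)))
          \<le> (\<Sum>m<M. 1 / real p ^ Suc m * ln (geo_part p (Suc m))) + L / (real p ^ M * (real p - 1))"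
    by simp
  then show ?thesis
    unfolding alpha_def L_def using p by (intro mult_left_mono) auto
qed

lemma alpha_nonneg:
  assumes "p \<ge> 2"
  shows "alpha p \<ge> 0"
proof -
  have "summable (\<lambda>m. 1 / real p ^ Suc m * ln (geo_part p (Suc m)))"
    by (rule summable_geometric_majorant[OF alpha_terms_bounds[OF assms]]) (use assms in auto)
  then have "0 \<le> (\<Sum>m. 1 / real p ^ Suc m * ln (geo_part p (Suc m)))"
    using alpha_terms_bounds(1)[OF assms] by (rule suminf_nonneg)
  then show ?thesis
    unfolding alpha_def using assms by simp
qed

lemma alpha_le_reciprocal:
  assumes "p \<ge> 2"
  shows "alpha p \<le> 1 / (real p * (real p - 1))"
proof -
  have p: "real p \<ge> 2" using assms by simp
  have "alpha p \<le> (1 - 1 / real p) * (ln (real p / (real p - 1)) / (real p - 1))"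
    using alpha_le_truncation[OF assms, of 0] by simp
  also have "\<dots> \<le> (1 - 1 / real p) * ((real p / (real p - 1) - 1) / (real p - 1))"
    using p by (intro mult_left_mono divide_right_mono ln_le_minus_one) auto
  also have "\<dots> = 1 / (real p * (real p - 1))"
  proof -
    have "real p / (real p - 1) - 1 = 1 / (real p - 1)" "1 - 1 / real p = (real p - 1) / real p"
      using p by (simp_all add: field_simps)
    then show ?thesis by simp
  qed
  finally show ?thesis .
qed

lemma beta_eq:
  "beta j p = (1 - 1 / real p) * (\<Sum>m. (1 / real p) ^ m / geo_part p m ^ j)"
  by (simp add: beta_def power_int_minus power_one_over field_simps)

lemma beta_terms_bounds:
  assumes "p \<ge> 2"
  shows "0 \<le> (1 / real p) ^ m / geo_part p m ^ j"
    and "(1 / real p) ^ m / geo_part p m ^ j \<le> 1 * (1 / real p) ^ m"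
    and "(1 - 1 / real p) ^ j * (1 / real p) ^ m \<le> (1 / real p) ^ m / geo_part p m ^ j"
proof -
  have g: "1 \<le> geo_part p m ^ j" "geo_part p m ^ j \<le> (real p / (real p - 1)) ^ j"
    using geo_part_ge_1[of p m] geo_part_le[OF assms, of m] by (auto intro: one_le_power power_mono)
  show "0 \<le> (1 / real p) ^ m / geo_part p m ^ j"
    using g by simp
  show "(1 / real p) ^ m / geo_part p m ^ j \<le> 1 * (1 / real p) ^ m"
    using g by (simp add: divide_le_eq mult_le_cancel_left1)
  have "(1 - 1 / real p) ^ j = 1 / (real p / (real p - 1)) ^ j"
    using assms by (simp add: field_simps power_divide)
  also have "\<dots> \<le> 1 / geo_part p m ^ j"
    using g by (intro divide_left_mono) auto
  finally show "(1 - 1 / real p) ^ j * (1 / real p) ^ m \<le> (1 / real p) ^ m / geo_part p m ^ j"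
    by (simp add: mult_left_mono mult.commute divide_inverse)
qed

lemma summable_beta_terms:
  assumes "p \<ge> 2"
  shows "summable (\<lambda>m. (1 / real p) ^ m / geo_part p m ^ j)"
  by (rule summable_geometric_majorant[OF beta_terms_bounds(1,2)[OF assms]]) (use assms in auto)

lemma beta_ge_truncation:
  assumes "p \<ge> 2"
  shows "beta j p \<ge> (1 - 1 / real p) * (\<Sum>m<M. (1 / real p) ^ m / geo_part p m ^ j)
                     + (1 / real p) ^ M * (1 - 1 / real p) ^ j"
proof -
  have p: "real p \<ge> 2" using assms by simp
  from suminf_ge_geometric_tail[where M = M, OF summable_beta_terms[OF assms, of j]
         beta_terms_bounds(3)[OF assms, of j]]
  have "(\<Sum>m<M. (1 / real p) ^ m / geo_part p m ^ j) + (1 - 1 / real p) ^ j * (1 / real p) ^ M / (1 - 1 / real p)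
          \<le> (\<Sum>m. (1 / real p) ^ m / geo_part p m ^ j)"
    using p by simp
  from mult_left_mono[OF this, of "1 - 1 / real p"]
  have "(1 - 1 / real p) * (\<Sum>m<M. (1 / real p) ^ m / geo_part p m ^ j)
          + (1 - 1 / real p) * ((1 - 1 / real p) ^ j * (1 / real p) ^ M / (1 - 1 / real p))
        \<le> beta j p"
    unfolding beta_eq distrib_left using p by simp
  moreover have "(1 - 1 / real p) * ((1 - 1 / real p) ^ j * (1 / real p) ^ M / (1 - 1 / real p))
      = (1 / real p) ^ M * (1 - 1 / real p) ^ j"
    using p by simp
  ultimately show ?thesis by linarith
qed

lemma beta_le_1:
  assumes "p \<ge> 2"
  shows "beta j p \<le> 1"
proof -
  have p: "real p \<ge> 2" using assms by simp
  from suminf_le_geometric_tail[where M = 0, OF summable_beta_terms[OF assms, of j]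
         beta_terms_bounds(2)[OF assms, of _ j]]
  have "(\<Sum>m. (1 / real p) ^ m / geo_part p m ^ j) \<le> 1 / (1 - 1 / real p)"
    using p by simp
  from mult_left_mono[OF this, of "1 - 1 / real p"] show ?thesis
    unfolding beta_eq using p by simp
qed

lemma beta_pos:
  assumes "p \<ge> 2"
  shows "beta j p > 0"
proof -
  have "0 < (1 - 1 / real p) ^ j" using assms by simp
  then show ?thesis using beta_ge_truncation[OF assms, of j 0] by simp
qed

lemma one_minus_beta_le:
  assumes "p \<ge> 2"
  shows "1 - beta j p \<le> real j / (real p * (real p - 1))"
proof -
  define r where "r = real p"
  have r: "r \<ge> 2" using assms by (simp add: r_def)
  have "beta j p \<ge> (1 - 1 / r) + 1 / r * (1 - 1 / r) ^ j"
    using beta_ge_truncation[OF assms, of j 1] by (simp add: r_def)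
  moreover have "1 - real j / r \<le> (1 - 1 / r) ^ j"
    using Bernoulli_inequality[of "- 1 / r" j] r by simp
  then have "1 / r * (1 - real j / r) \<le> 1 / r * (1 - 1 / r) ^ j"
    using r by (intro mult_left_mono) auto
  moreover have "(1 - 1 / r) + 1 / r * (1 - real j / r) = 1 - real j / r ^ 2"
    using r by (simp add: field_simps power2_eq_square)
  moreover have "real j / r ^ 2 \<le> real j / (r * (r - 1))"
    using r by (intro divide_left_mono) (auto simp: power2_eq_square)
  ultimately show ?thesis by (simp add: r_def)
qed

lemma beta_2_ge: "beta j 2 \<ge> 1 / 2"
proof -
  have "1 / 2 + (1 / 2) ^ j / 2 \<le> beta j 2"
    using beta_ge_truncation[of 2 j 1] by simp
  moreover have "0 \<le> (1 / 2 :: real) ^ j" by simp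
  ultimately show ?thesis by linarith
qed

lemma beta_2_le: "beta j 2 \<le> 1 / 2 + (2 / 3) ^ j / 2"
proof -
  have tail: "(1 / 2) ^ m / geo_part 2 m ^ j \<le> (2 / 3) ^ j * (1 / 2) ^ m" if "1 \<le> m" for m
  proof -
    have "3 / 2 \<le> geo_part 2 m"
      using sum_mono2[of "{..m}" "{0, 1}" "\<lambda>i. 1 / real 2 ^ i"] that
      by (simp add: geo_part_def)
    then have "(3 / 2) ^ j \<le> geo_part 2 m ^ j"
      by (intro power_mono) auto
    then have "1 / geo_part 2 m ^ j \<le> 1 / (3 / 2) ^ j"
      using \<open>3 / 2 \<le> geo_part 2 m\<close> by (intro divide_left_mono) auto
    also have "\<dots> = (2 / 3) ^ j"
      by (simp add: power_divide)
    finally have "1 / geo_part 2 m ^ j \<le> (2 / 3) ^ j" .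
    from mult_left_mono[OF this, of "(1 / 2) ^ m"] show ?thesis
      by (simp add: mult.commute)
  qed
  have "summable (\<lambda>m. (1 / 2) ^ m / geo_part 2 m ^ j :: real)"
    using summable_beta_terms[of 2 j] by simp
  from suminf_le_geometric_tail[where M = 1, OF this tail]
  have "(\<Sum>m. (1 / 2) ^ m / geo_part 2 m ^ j) \<le> 1 + (2 / 3) ^ j"
    by simp
  then show ?thesis
    unfolding beta_eq by simp
qed

definition ln_majorant :: "real \<Rightarrow> real" where
  "ln_majorant u = 2 * u + 2 * u ^ 3 / 3 + 2 * u ^ 5 / (5 * (1 - u ^ 2))"

text \<open>The first terms of \<open>ln ((1 + u) / (1 - u)) = 2 (u + u\<^sup>3/3 + u\<^sup>5/5 + \<dots>)\<close>, with the
  remainder bounded by a geometric series in \<open>u\<^sup>2\<close>.\<close>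

lemma ln_le_ln_majorant:
  assumes "x \<ge> 1"
  shows "ln x \<le> ln_majorant ((x - 1) / (x + 1))"
proof -
  define u where "u = (x - 1) / (x + 1)"
  have u: "0 \<le> u" "u < 1" using assms by (auto simp: u_def)
  define h where "h t = ln_majorant t - ln (1 + t) + ln (1 - t)" for t
  have deriv: "(h has_real_derivative 4 / 5 * t ^ 6 / (1 - t ^ 2) ^ 2) (at t)" if "t \<in> {0..u}" for t
  proof -
    have t: "0 \<le> t" "t < 1" using that u by auto
    then have "1 - t ^ 2 \<noteq> 0" "1 + t \<noteq> 0" "1 - t \<noteq> 0"
      by (auto simp: power_less_one_iff less_imp_neq)
    then have "(h has_real_derivative 2 + 2 * (3 * t ^ 2) / 3
        + 2 * (5 * t ^ 4 * (5 * (1 - t ^ 2)) - t ^ 5 * (5 * (- (2 * t)))) / (5 * (1 - t ^ 2)) ^ 2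
        - 1 / (1 + t) + (- 1) / (1 - t)) (at t)"
      unfolding h_def ln_majorant_def using t by (auto intro!: derivative_eq_intros simp: power2_eq_square)
    moreover have "2 + 2 * (3 * t ^ 2) / 3
        + 2 * (5 * t ^ 4 * (5 * (1 - t ^ 2)) - t ^ 5 * (5 * (- (2 * t)))) / (5 * (1 - t ^ 2)) ^ 2
        - 1 / (1 + t) + (- 1) / (1 - t) = 4 / 5 * t ^ 6 / (1 - t ^ 2) ^ 2"
      using \<open>1 - t ^ 2 \<noteq> 0\<close> \<open>1 + t \<noteq> 0\<close> \<open>1 - t \<noteq> 0\<close> by (simp add: divide_simps) algebra
    ultimately show ?thesis by simp
  qed
  have "h 0 \<le> h u"
    by (rule deriv_nonneg_imp_mono[OF deriv]) (use u in auto)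
  moreover have "(1 + u) / (1 - u) = x"
    using assms by (simp add: u_def field_simps)
  then have "ln x = ln (1 + u) - ln (1 - u)"
    using u by (auto simp: ln_div)
  ultimately show ?thesis
    unfolding u_def[symmetric] by (simp add: h_def ln_majorant_def)
qed

lemma prodinf_ge_tail_sum:
  fixes f :: "nat \<Rightarrow> real"
  assumes pos: "\<And>i. 0 < f i" and le1: "\<And>i. f i \<le> 1"
    and tail: "\<And>n. (\<Sum>i\<in>{a..<n}. 1 - f i) \<le> B" and "B < 1"
  shows "(\<Prod>i<a. f i) * (1 - B) \<le> prodinf f" and "prodinf f \<le> 1"
proof -
  define P where "P = (\<lambda>n. \<Prod>i<n. f i)"
  define c where "c = P a * (1 - B)"
  have "decseq P"
    unfolding decseq_Suc_iff P_def using pos le1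
    by (auto simp: mult_left_le prod_nonneg less_imp_le)
  have Pa: "P a > 0" unfolding P_def using pos by (intro prod_pos) auto
  have "0 \<le> B" using tail[of a] by simp
  have c_le: "c \<le> P n" for n
  proof (cases "n \<le> a")
    case True
    have "c \<le> P a" using Pa \<open>0 \<le> B\<close> by (simp add: c_def mult_left_le)
    also have "\<dots> \<le> P n" using \<open>decseq P\<close> True by (simp add: decseq_def)
    finally show ?thesis .
  next
    case False
    have "1 - B \<le> 1 - (\<Sum>i\<in>{a..<n}. 1 - f i)" using tail[of n] by simp
    also have "\<dots> \<le> (\<Prod>i\<in>{a..<n}. 1 - (1 - f i))"
      by (rule Weierstrass_prod_ineq) (use pos le1 in \<open>auto simp: less_imp_le\<close>)
    finally have "c \<le> P a * (\<Prod>i\<in>{a..<n}. f i)"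
      unfolding c_def using Pa by (simp add: mult_left_mono)
    also have "\<dots> = P n"
      unfolding P_def lessThan_atLeast0 using False by (simp add: prod.atLeastLessThan_concat)
    finally show ?thesis .
  qed
  obtain L where L: "P \<longlonglongrightarrow> L" "\<And>n. L \<le> P n"
    using decseq_convergent[OF \<open>decseq P\<close>, of c] c_le by blast
  have "c \<le> L" by (rule LIMSEQ_le_const[OF L(1)]) (use c_le in auto)
  moreover have "c > 0" using Pa \<open>B < 1\<close> by (simp add: c_def)
  ultimately have "prodinf f = L"
    using prodinf_eq_prod_lim'[of f L] L(1) unfolding P_def by simp
  then show "(\<Prod>i<a. f i) * (1 - B) \<le> prodinf f" and "prodinf f \<le> 1"
    using \<open>c \<le> L\<close> L(2)[of 0] by (auto simp: c_def P_def)
qed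

subsection \<open>Fixed-point arithmetic\<close>

text \<open>An integer \<open>x\<close> stands for the real number \<open>x / scale\<close>.\<close>

definition scale :: int where
  "scale = 100000000"

lemma of_int_scale [simp]: "real_of_int scale = 100000000"
  by (simp add: scale_def)

definition ceil_div :: "int \<Rightarrow> int \<Rightarrow> int" where
  "ceil_div a b = - (- a div b)"

lemma ceil_div_ge:
  assumes "b > 0"
  shows "real_of_int a / real_of_int b \<le> real_of_int (ceil_div a b)"
  using real_of_int_div4[of "- a" b] by (simp add: ceil_div_def)

lemma div_le_divide_bound:
  fixes a q :: int
  assumes "0 \<le> a" "real_of_int a \<le> B" "q > 0"
  shows "0 \<le> a div q" and "real_of_int (a div q) \<le> B / real_of_int q"
proof -
  show "0 \<le> a div q"
    using assms by (simp add: pos_imp_zdiv_nonneg_iff)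
  have "real_of_int (a div q) \<le> real_of_int a / real_of_int q"
    by (rule real_of_int_div4)
  also have "\<dots> \<le> B / real_of_int q"
    using assms by (intro divide_right_mono) auto
  finally show "real_of_int (a div q) \<le> B / real_of_int q" .
qed

definition fix_mul :: "int \<Rightarrow> int \<Rightarrow> int" where
  "fix_mul x y = x * y div scale"

lemma fix_mul_le:
  assumes "0 \<le> x" "real_of_int x \<le> of_int scale * a" "0 \<le> y" "real_of_int y \<le> of_int scale * b"
  shows "0 \<le> fix_mul x y" and "real_of_int (fix_mul x y) \<le> of_int scale * (a * b)"
proof -
  have "real_of_int (x * y) \<le> (of_int scale * a) * (of_int scale * b)"
    unfolding of_int_mult using assms by (intro mult_mono) auto
  from div_le_divide_bound[OF _ this, of scale] assms
  show "0 \<le> fix_mul x y" and "real_of_int (fix_mul x y) \<le> of_int scale * (a * b)"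
    by (simp_all add: fix_mul_def scale_def)
qed

definition fix_pow :: "int \<Rightarrow> nat \<Rightarrow> int" where
  "fix_pow c n = (fix_mul c ^^ n) scale"

lemma fix_pow_le:
  assumes "0 \<le> c" "real_of_int c \<le> of_int scale * x"
  shows "0 \<le> fix_pow c n \<and> real_of_int (fix_pow c n) \<le> of_int scale * x ^ n"
proof (induction n)
  case 0
  then show ?case by (simp add: fix_pow_def scale_def)
next
  case (Suc n)
  then show ?case
    using fix_mul_le[OF assms, of "fix_pow c n" "x ^ n"] by (simp add: fix_pow_def mult.commute)
qed

primrec fix_pow_list :: "int \<Rightarrow> int \<Rightarrow> nat \<Rightarrow> int list" where
  "fix_pow_list c y 0 = []"
| "fix_pow_list c y (Suc n) = y # fix_pow_list c (fix_mul c y) n"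

lemma fix_pow_list_eq: "fix_pow_list c (fix_pow c k) n = map (fix_pow c) [k..<k + n]"
proof (induction n arbitrary: k)
  case 0
  then show ?case by simp
next
  case (Suc n)
  have "fix_mul c (fix_pow c k) = fix_pow c (Suc k)"
    by (simp add: fix_pow_def)
  then show ?case
    using Suc[of "Suc k"] by (simp add: upt_rec)
qed

lemma map2_map_map: "map2 f (map g xs) (map h xs) = map (\<lambda>x. f (g x) (h x)) xs"
  by (induction xs) auto

definition ln_majorant_ceil :: "int \<Rightarrow> int \<Rightarrow> int \<Rightarrow> int" where
  "ln_majorant_ceil a b q =
     ceil_div (scale * (30 * a * b ^ 2 * (b ^ 2 - a ^ 2) + 10 * a ^ 3 * (b ^ 2 - a ^ 2) + 6 * a ^ 5))
              (15 * b ^ 3 * (b ^ 2 - a ^ 2) * q)"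

lemma ln_majorant_ceil_ge:
  assumes "0 \<le> a" "a < b" "q > 0"
  shows "of_int scale * (ln_majorant (real_of_int a / real_of_int b) / real_of_int q)
           \<le> real_of_int (ln_majorant_ceil a b q)"
proof -
  define x y where "x = real_of_int a" and "y = real_of_int b"
  have xy: "0 \<le> x" "x < y" using assms by (simp_all add: x_def y_def)
  then have "y ^ 2 - x ^ 2 > 0"
    by (simp add: power_strict_mono)
  then have "ln_majorant (x / y)
      = (30 * x * y ^ 2 * (y ^ 2 - x ^ 2) + 10 * x ^ 3 * (y ^ 2 - x ^ 2) + 6 * x ^ 5)
        / (15 * y ^ 3 * (y ^ 2 - x ^ 2))"
    using xy by (simp add: ln_majorant_def field_simps power2_eq_square) (simp add: algebra_simps power_def)
  moreover have "15 * b ^ 3 * (b ^ 2 - a ^ 2) * q > 0"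
    using assms \<open>y ^ 2 - x ^ 2 > 0\<close> unfolding x_def y_def
    by (simp add: power_strict_mono)
  ultimately show ?thesis
    using ceil_div_ge[of "15 * b ^ 3 * (b ^ 2 - a ^ 2) * q"
        "scale * (30 * a * b ^ 2 * (b ^ 2 - a ^ 2) + 10 * a ^ 3 * (b ^ 2 - a ^ 2) + 6 * a ^ 5)"]
    by (simp add: ln_majorant_ceil_def x_def y_def)
qed

definition ln_ceil :: "int \<Rightarrow> int \<Rightarrow> int \<Rightarrow> int" where
  "ln_ceil n d q = ln_majorant_ceil (n - d) (n + d) q"

lemma ln_ceil_ge:
  assumes "0 < d" "d \<le> n" "q > 0"
  shows "of_int scale * (ln (real_of_int n / real_of_int d) / real_of_int q)
           \<le> real_of_int (ln_ceil n d q)"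
proof -
  have "real_of_int n / real_of_int d - 1 = real_of_int (n - d) / real_of_int d"
    "real_of_int n / real_of_int d + 1 = real_of_int (n + d) / real_of_int d"
    using assms by (simp_all add: field_simps)
  then have "(real_of_int n / real_of_int d - 1) / (real_of_int n / real_of_int d + 1)
      = real_of_int (n - d) / real_of_int (n + d)"
    using assms by simp
  then have "ln (real_of_int n / real_of_int d) \<le> ln_majorant (real_of_int (n - d) / real_of_int (n + d))"
    using ln_le_ln_majorant[of "real_of_int n / real_of_int d"] assms by simp
  then have "of_int scale * (ln (real_of_int n / real_of_int d) / real_of_int q)
      \<le> of_int scale * (ln_majorant (real_of_int (n - d) / real_of_int (n + d)) / real_of_int q)"
    using assms by (simp add: divide_right_mono)
  also have "\<dots> \<le> real_of_int (ln_ceil n d q)"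
    unfolding ln_ceil_def by (rule ln_majorant_ceil_ge) (use assms in auto)
  finally show ?thesis .
qed

text \<open>The \<open>m\<close>-th summand bounds \<open>ln (geo_part p (m + 1)) / p\<^sup>m\<^sup>+\<^sup>1\<close>, using
  \<open>geo_part p (m + 1) = (p\<^sup>m\<^sup>+\<^sup>2 - 1) / (p\<^sup>m\<^sup>+\<^sup>1 (p - 1))\<close>; the last one bounds the tail of the series.\<close>

definition alpha_upper :: "nat \<Rightarrow> nat \<Rightarrow> int" where
  "alpha_upper K p = ceil_div ((int p - 1) *
     ((\<Sum>m\<leftarrow>[0..<K]. ln_ceil (int p ^ (m + 2) - 1) (int p ^ (m + 1) * (int p - 1)) (int p ^ (m + 1)))
      + ln_ceil (int p) (int p - 1) (int p ^ K * (int p - 1)))) (int p)"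

lemma alpha_le_alpha_upper:
  assumes "p \<ge> 2"
  shows "of_int scale * alpha p \<le> real_of_int (alpha_upper K p)"
proof -
  define r where "r = real p"
  define U where "U m = ln_ceil (int p ^ (m + 2) - 1) (int p ^ (m + 1) * (int p - 1)) (int p ^ (m + 1))" for m
  define V where "V = ln_ceil (int p) (int p - 1) (int p ^ K * (int p - 1))"
  have r: "r \<ge> 2" using assms by (simp add: r_def)
  have terms_le: "of_int scale * (1 / r ^ Suc m * ln (geo_part p (Suc m))) \<le> real_of_int (U m)" for m
  proof -
    have "geo_part p (Suc m) = real_of_int (int p ^ (m + 2) - 1) / real_of_int (int p ^ (m + 1) * (int p - 1))"
      using geo_part_eq[OF assms, of "Suc m"] assms by simp
    moreover have "1 \<le> int p ^ (m + 1)"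
      using assms by (intro one_le_power) auto
    then have "int p ^ (m + 1) * (int p - 1) \<le> int p ^ (m + 2) - 1"
      by (simp add: algebra_simps)
    ultimately show ?thesis
      using ln_ceil_ge[of "int p ^ (m + 1) * (int p - 1)" "int p ^ (m + 2) - 1" "int p ^ (m + 1)"] assms
      by (simp add: r_def U_def)
  qed
  have tail: "of_int scale * (ln (r / (r - 1)) / (r ^ K * (r - 1))) \<le> real_of_int V"
    using ln_ceil_ge[of "int p - 1" "int p" "int p ^ K * (int p - 1)"] assms by (simp add: r_def V_def)
  have "of_int scale * alpha p \<le> of_int scale * ((1 - 1 / r) *
      ((\<Sum>m<K. 1 / r ^ Suc m * ln (geo_part p (Suc m))) + ln (r / (r - 1)) / (r ^ K * (r - 1))))"
    using alpha_le_truncation[OF assms, of K] by (simp add: r_def)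
  also have "\<dots> = (1 - 1 / r) * ((\<Sum>m<K. of_int scale * (1 / r ^ Suc m * ln (geo_part p (Suc m))))
      + of_int scale * (ln (r / (r - 1)) / (r ^ K * (r - 1))))"
    by (simp only: sum_distrib_left distrib_left mult.left_commute)
  also have "\<dots> \<le> (1 - 1 / r) * ((\<Sum>m<K. real_of_int (U m)) + real_of_int V)"
    using r terms_le tail by (intro mult_left_mono add_mono sum_mono) auto
  also have "\<dots> = real_of_int ((int p - 1) * ((\<Sum>m\<leftarrow>[0..<K]. U m) + V)) / real_of_int (int p)"
    using r by (simp add: r_def field_simps interv_sum_list_conv_sum_set_nat atLeast0LessThan)
  also have "\<dots> \<le> real_of_int (alpha_upper K p)"
    unfolding alpha_upper_def U_def V_def by (rule ceil_div_ge) (use assms in simp)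
  finally show ?thesis .
qed

lemma sum_list_alpha_le_alpha_upper:
  assumes "\<forall>p\<in>fst ` set ps. p \<ge> 2"
  shows "of_int scale * (\<Sum>p\<leftarrow>map fst ps. alpha p) \<le> real_of_int (\<Sum>(p, K)\<leftarrow>ps. alpha_upper K p)"
  using assms
proof (induction ps)
  case (Cons pK ps)
  obtain p K where "pK = (p, K)" by fastforce
  with Cons alpha_le_alpha_upper[of p K] show ?case
    by (simp add: distrib_left)
qed simp

definition geo_part_inv_floor :: "nat \<Rightarrow> nat \<Rightarrow> int" where
  "geo_part_inv_floor p m = scale * int p ^ m * (int p - 1) div (int p ^ Suc m - 1)"

lemma geo_part_inv_floor_le:
  assumes "p \<ge> 2"
  shows "0 \<le> geo_part_inv_floor p m"
    and "real_of_int (geo_part_inv_floor p m) \<le> of_int scale * (1 / geo_part p m)"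
proof -
  define N D where "N = scale * int p ^ m * (int p - 1)" and "D = int p ^ Suc m - 1"
  have "1 < int p ^ Suc m" "1 < real p ^ Suc m"
    using assms by (intro one_less_power; simp)+
  then have D: "real_of_int D = real p ^ Suc m - 1" "0 < D"
    by (simp_all add: D_def)
  have "0 \<le> N" using assms by (simp add: N_def scale_def)
  moreover have "of_int scale * (1 / geo_part p m) = real_of_int N / real_of_int D"
    using assms D(1) \<open>1 < real p ^ Suc m\<close> by (simp add: geo_part_eq N_def)
  ultimately show "0 \<le> geo_part_inv_floor p m"
    and "real_of_int (geo_part_inv_floor p m) \<le> of_int scale * (1 / geo_part p m)"
    using div_le_divide_bound[OF _ order_refl D(2), of N]
    by (simp_all add: geo_part_inv_floor_def N_def D_def)
qed

definition beta_term_lower :: "int \<Rightarrow> int \<Rightarrow> int \<Rightarrow> int" where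
  "beta_term_lower p q y = (p - 1) * (y div q) div p"

lemma beta_term_lower_le:
  assumes "p \<ge> 2" "0 \<le> y" "real_of_int y \<le> of_int scale * z"
  shows "0 \<le> beta_term_lower (int p) (int p ^ m) y"
    and "real_of_int (beta_term_lower (int p) (int p ^ m) y) \<le> of_int scale * ((1 - 1 / real p) * ((1 / real p) ^ m * z))"
proof -
  note d = div_le_divide_bound[OF assms(2,3), of "int p ^ m"]
  have "(real p - 1) * real_of_int (y div int p ^ m) \<le> (real p - 1) * (of_int scale * z / real p ^ m)"
    using d assms(1) by (intro mult_left_mono) auto
  then have "real_of_int ((int p - 1) * (y div int p ^ m)) \<le> (real p - 1) * (of_int scale * z / real p ^ m)"
    by simp
  from div_le_divide_bound[OF _ this, of "int p"] d assms(1)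
  show "0 \<le> beta_term_lower (int p) (int p ^ m) y"
    and "real_of_int (beta_term_lower (int p) (int p ^ m) y) \<le> of_int scale * ((1 - 1 / real p) * ((1 / real p) ^ m * z))"
    by (simp_all add: beta_term_lower_def field_simps power_one_over)
qed

lemma beta_tail_lower_le:
  assumes "p \<ge> 2"
  shows "0 \<le> fix_pow (scale * (int p - 1) div int p) j div int p ^ K
    \<and> real_of_int (fix_pow (scale * (int p - 1) div int p) j div int p ^ K)
        \<le> of_int scale * ((1 / real p) ^ K * (1 - 1 / real p) ^ j)"
proof -
  have "real_of_int (scale * (int p - 1) div int p) \<le> of_int scale * (1 - 1 / real p)"
    using real_of_int_div4[of "scale * (int p - 1)" "int p"] assms by (simp add: field_simps)
  then have "0 \<le> fix_pow (scale * (int p - 1) div int p) j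
      \<and> real_of_int (fix_pow (scale * (int p - 1) div int p) j) \<le> of_int scale * (1 - 1 / real p) ^ j"
    using assms by (intro fix_pow_le) (auto simp: scale_def pos_imp_zdiv_nonneg_iff)
  then show ?thesis
    using div_le_divide_bound[of _ "of_int scale * (1 - 1 / real p) ^ j" "int p ^ K"] assms
    by (auto simp: power_one_over)
qed

text \<open>The summands bound those of the truncated series for \<open>\<beta>\<^sub>j(p)\<close>, with \<open>geo_part_inv_floor p m\<close>
  in place of \<open>scale / geo_part p m\<close>; the last one bounds the tail.\<close>

definition beta_lower :: "nat \<Rightarrow> nat \<Rightarrow> nat \<Rightarrow> int" where
  "beta_lower K j p =
     (\<Sum>m\<leftarrow>[0..<K]. beta_term_lower (int p) (int p ^ m) (fix_pow (geo_part_inv_floor p m) j))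
     + fix_pow (scale * (int p - 1) div int p) j div int p ^ K"

lemma beta_lower_le:
  assumes "p \<ge> 2"
  shows "0 \<le> beta_lower K j p \<and> real_of_int (beta_lower K j p) \<le> of_int scale * beta j p"
proof -
  define r where "r = real p"
  have "0 \<le> fix_pow (geo_part_inv_floor p m) j
      \<and> real_of_int (fix_pow (geo_part_inv_floor p m) j) \<le> of_int scale * (1 / geo_part p m) ^ j" for m
    by (rule fix_pow_le[OF geo_part_inv_floor_le[OF assms]])
  then have terms: "0 \<le> beta_term_lower (int p) (int p ^ m) (fix_pow (geo_part_inv_floor p m) j)
      \<and> real_of_int (beta_term_lower (int p) (int p ^ m) (fix_pow (geo_part_inv_floor p m) j))
         \<le> of_int scale * ((1 - 1 / r) * ((1 / r) ^ m / geo_part p m ^ j))" for m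
    using beta_term_lower_le[OF assms, of _ "(1 / geo_part p m) ^ j" m]
    by (auto simp: r_def power_one_over)
  note tail = beta_tail_lower_le[OF assms, of j K, folded r_def]
  have "real_of_int (beta_lower K j p)
      = (\<Sum>m<K. real_of_int (beta_term_lower (int p) (int p ^ m) (fix_pow (geo_part_inv_floor p m) j)))
        + real_of_int (fix_pow (scale * (int p - 1) div int p) j div int p ^ K)"
    by (simp add: beta_lower_def interv_sum_list_conv_sum_set_nat atLeast0LessThan)
  also have "\<dots> \<le> (\<Sum>m<K. of_int scale * ((1 - 1 / r) * ((1 / r) ^ m / geo_part p m ^ j)))
        + of_int scale * ((1 / r) ^ K * (1 - 1 / r) ^ j)"
    using terms tail by (intro add_mono sum_mono) auto
  also have "\<dots> = of_int scale * ((1 - 1 / r) * (\<Sum>m<K. (1 / r) ^ m / geo_part p m ^ j)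
        + (1 / r) ^ K * (1 - 1 / r) ^ j)"
    by (simp add: sum_distrib_left distrib_left)
  also have "\<dots> \<le> of_int scale * beta j p"
    using beta_ge_truncation[OF assms, of j K] by (simp add: r_def)
  finally show ?thesis
    using terms tail by (auto simp: beta_lower_def intro!: sum_list_nonneg add_nonneg_nonneg)
qed

text \<open>The list versions compute the bounds for \<open>j = 1, \<dots>, n\<close> at once, so that every fixed-point
  power is computed only once when they are evaluated by \<open>code_simp\<close>.\<close>

lemma fix_pow_list_from_1: "fix_pow_list c (fix_pow c 1) n = map (fix_pow c) [1..<Suc n]"
  using fix_pow_list_eq[of c 1 n] by simp

primrec beta_terms_lower_list :: "nat \<Rightarrow> nat \<Rightarrow> nat \<Rightarrow> int list" where
  "beta_terms_lower_list p 0 n = replicate n 0"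
| "beta_terms_lower_list p (Suc K) n =
     map2 (+) (beta_terms_lower_list p K n)
       (map (beta_term_lower (int p) (int p ^ K))
          (fix_pow_list (geo_part_inv_floor p K) (fix_pow (geo_part_inv_floor p K) 1) n))"

lemma beta_terms_lower_list_eq:
  "beta_terms_lower_list p K n = map (\<lambda>j. \<Sum>m\<leftarrow>[0..<K].
      beta_term_lower (int p) (int p ^ m) (fix_pow (geo_part_inv_floor p m) j)) [1..<Suc n]"
proof (induction K)
  case 0
  then show ?case by (simp add: map_replicate_const del: upt_Suc)
next
  case (Suc K)
  show ?case
    unfolding beta_terms_lower_list.simps Suc fix_pow_list_from_1
    by (simp add: map2_map_map upt_Suc_append[of 0 K] del: upt_Suc)
qed

definition beta_lower_list :: "nat \<Rightarrow> nat \<Rightarrow> nat \<Rightarrow> int list" where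
  "beta_lower_list K p n =
     map2 (+) (beta_terms_lower_list p K n)
       (map (\<lambda>y. y div int p ^ K)
          (fix_pow_list (scale * (int p - 1) div int p) (fix_pow (scale * (int p - 1) div int p) 1) n))"

lemma beta_lower_list_eq: "beta_lower_list K p n = map (\<lambda>j. beta_lower K j p) [1..<Suc n]"
  unfolding beta_lower_list_def beta_terms_lower_list_eq fix_pow_list_from_1
  by (simp add: map2_map_map beta_lower_def del: upt_Suc)

fun beta_prod_lower :: "nat \<Rightarrow> (nat \<times> nat) list \<Rightarrow> int" where
  "beta_prod_lower j [] = scale"
| "beta_prod_lower j ((p, K) # ps) = fix_mul (beta_lower K j p) (beta_prod_lower j ps)"

lemma beta_prod_lower_le:
  assumes "\<forall>p\<in>fst ` set ps. p \<ge> 2"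
  shows "0 \<le> beta_prod_lower j ps
    \<and> real_of_int (beta_prod_lower j ps) \<le> of_int scale * (\<Prod>p\<leftarrow>map fst ps. beta j p)"
  using assms
proof (induction ps)
  case Nil
  then show ?case by (simp add: scale_def)
next
  case (Cons pK ps)
  obtain p K where pK: "pK = (p, K)" by fastforce
  then have "p \<ge> 2" using Cons.prems by simp
  have IH: "0 \<le> beta_prod_lower j ps"
    "real_of_int (beta_prod_lower j ps) \<le> of_int scale * (\<Prod>p\<leftarrow>map fst ps. beta j p)"
    using Cons by auto
  have "0 \<le> beta_lower K j p" "real_of_int (beta_lower K j p) \<le> of_int scale * beta j p"
    using beta_lower_le[OF \<open>p \<ge> 2\<close>] by auto
  from fix_mul_le[OF this IH] show ?case by (simp add: pK)
qed

fun beta_prod_lower_list :: "(nat \<times> nat) list \<Rightarrow> nat \<Rightarrow> int list" where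
  "beta_prod_lower_list [] n = replicate n scale"
| "beta_prod_lower_list ((p, K) # ps) n = map2 fix_mul (beta_lower_list K p n) (beta_prod_lower_list ps n)"

lemma beta_prod_lower_list_eq:
  "beta_prod_lower_list ps n = map (\<lambda>j. beta_prod_lower j ps) [1..<Suc n]"
  by (induction ps n rule: beta_prod_lower_list.induct)
     (auto simp: beta_lower_list_eq map2_map_map map_replicate_const simp del: upt_Suc)

text \<open>Here \<open>b\<close> approximates \<open>scale \<cdot> \<beta>\<^sub>j(2)\<close>, \<open>y\<close> approximates \<open>scale\<close> times the product of
  \<open>\<beta>\<^sub>j(p)\<close> over \<open>3 \<le> p \<le> 29\<close>, and \<open>t / scale\<close> bounds \<open>\<Sum> 1 / (p (p - 1))\<close> over the primes \<open>p \<ge> 31\<close>.\<close>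

definition lambda_term_lower :: "int \<Rightarrow> nat \<Rightarrow> int \<Rightarrow> int \<Rightarrow> int" where
  "lambda_term_lower t j b y = fix_mul (fix_mul (max 0 (2 * b - scale)) y) (max 0 (scale - int j * t)) div int j"

lemma lambda_term_lower_le:
  assumes "0 \<le> b" "real_of_int b \<le> of_int scale * \<beta>" "\<beta> \<ge> 1 / 2"
    and "0 \<le> y" "real_of_int y \<le> of_int scale * Y"
    and "Y * max 0 (1 - real j * real_of_int t / of_int scale) \<le> P" "j \<ge> 1"
  shows "real_of_int (lambda_term_lower t j b y) \<le> of_int scale * (1 / real j * ((2 * \<beta> - 1) * P))"
proof -
  define m where "m = max 0 (1 - real j * real_of_int t / of_int scale)"
  have u: "0 \<le> max 0 (2 * b - scale)" "real_of_int (max 0 (2 * b - scale)) \<le> of_int scale * (2 * \<beta> - 1)"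
    using assms(2,3) by (auto simp: scale_def)
  have "of_int scale * m = max 0 (of_int scale - real j * real_of_int t)"
    by (simp add: m_def max_def field_simps)
  then have w: "0 \<le> max 0 (scale - int j * t)" "real_of_int (max 0 (scale - int j * t)) \<le> of_int scale * m"
    by (simp_all add: of_int_max)
  note v = fix_mul_le[OF u assms(4,5)]
  note z = fix_mul_le[OF v w]
  have "real_of_int (lambda_term_lower t j b y) \<le> of_int scale * ((2 * \<beta> - 1) * Y * m) / real j"
    using div_le_divide_bound(2)[OF z, of "int j"] assms(7) by (simp add: lambda_term_lower_def)
  also have "\<dots> \<le> of_int scale * ((2 * \<beta> - 1) * P) / real j"
    using mult_left_mono[OF assms(6)[folded m_def], of "2 * \<beta> - 1"] assms(3)
    by (intro divide_right_mono) (auto simp: mult.assoc)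
  finally show ?thesis by simp
qed

subsection \<open>Sums over primes\<close>

definition small_primes :: "nat list" where
  "small_primes = [2, 3, 5, 7, 11, 13, 17, 19, 23, 29]"

lemma small_primes_ge_2: "p \<in> set small_primes \<Longrightarrow> p \<ge> 2"
  by (auto simp: small_primes_def)

lemma distinct_small_primes: "distinct small_primes"
  by (simp add: small_primes_def)

lemma prime_below_31_in_small_primes:
  assumes "prime p" "p < 31"
  shows "p \<in> set small_primes"
proof -
  have "\<forall>i\<in>set [0..<31]. 2 \<le> i \<longrightarrow> (\<forall>q\<in>set [2, 3, 5]. q dvd i \<longrightarrow> q = i) \<longrightarrow> i \<in> set small_primes"
    unfolding small_primes_def by code_simp
  moreover have "\<forall>q\<in>set [2, 3, 5]. q dvd p \<longrightarrow> q = p"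
    using assms(1) by (auto simp: prime_nat_iff)
  ultimately show ?thesis
    using assms prime_ge_2_nat by auto
qed

definition prime_weight :: "nat \<Rightarrow> real" where
  "prime_weight p = (if prime p then 1 / (real p * (real p - 1)) else 0)"

lemma prime_weight_nonneg: "0 \<le> prime_weight p"
proof (cases "prime p")
  case True
  then have "real p \<ge> 2" using prime_ge_2_nat by simp
  then show ?thesis by (simp add: prime_weight_def)
qed (simp add: prime_weight_def)

lemma sum_le_telescope:
  fixes f g :: "nat \<Rightarrow> real"
  assumes "\<And>i. m \<le> i \<Longrightarrow> f i \<le> g i - g (Suc i)" "\<And>i. m \<le> i \<Longrightarrow> 0 \<le> g i"
  shows "(\<Sum>i\<in>{m..<n}. f i) \<le> g m"
proof (cases "m \<le> n")
  case True
  have "(\<Sum>i\<in>{m..<n}. f i) \<le> (\<Sum>i\<in>{m..<n}. g i - g (Suc i))"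
    using assms(1) by (intro sum_mono) auto
  also have "\<dots> = g m - g n"
    using sum_Suc_diff'[OF True, of g] by (simp add: sum_subtractf)
  finally show ?thesis using assms(2)[of n] True by linarith
next
  case False
  then show ?thesis using assms(2)[of m] by simp
qed

definition small_prime_free :: "int \<Rightarrow> bool" where
  "small_prime_free n \<longleftrightarrow> (\<forall>q\<in>set [2, 3, 5, 7, 11, 13, 17, 19, 23, 29, 31]. q dvd n \<longrightarrow> q = n)"

lemma prime_imp_small_prime_free:
  assumes "prime p"
  shows "small_prime_free (int p)"
  unfolding small_prime_free_def
proof (intro ballI impI)
  fix q :: int
  assume "q \<in> set [2, 3, 5, 7, 11, 13, 17, 19, 23, 29, 31]" "q dvd int p"
  then have "q \<ge> 2" "int (nat q) dvd int p" by auto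
  then have "nat q dvd p" "nat q \<noteq> 1" by (simp_all only: int_dvd_int_iff)
  then have "nat q = p"
    using assms prime_nat_iff by blast
  then show "q = int p"
    using \<open>q \<ge> 2\<close> by simp
qed

definition prime_weight_ceil :: "int \<Rightarrow> int" where
  "prime_weight_ceil n = (if small_prime_free n then ceil_div scale (n * (n - 1)) else 0)"

text \<open>Primes above 500 are odd, and over odd \<open>i\<close> the weights \<open>1 / (i (i - 2))\<close> telescope to
  \<open>1 / (2 \<cdot> 499)\<close>.\<close>

definition prime_tail_upper :: int where
  "prime_tail_upper = (\<Sum>n\<leftarrow>[31..500]. prime_weight_ceil n) + ceil_div scale 998"

lemma sum_prime_weight_le_below_501:
  "(\<Sum>p\<in>{31..<501}. prime_weight p) \<le> real_of_int (\<Sum>n\<leftarrow>[31..500]. prime_weight_ceil n) / of_int scale"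
proof -
  have "(\<Sum>p\<in>{31..<501}. prime_weight p) \<le> (\<Sum>p\<in>{31..<501}. real_of_int (prime_weight_ceil (int p)) / of_int scale)"
  proof (rule sum_mono)
    fix p :: nat
    assume p: "p \<in> {31..<501}"
    have pos: "int p * (int p - 1) > 0" using p by simp
    have "0 < real_of_int (int p * (int p - 1))"
      using pos by (simp only: of_int_0_less_iff)
    then have "0 \<le> real_of_int scale / real_of_int (int p * (int p - 1))"
      by (simp add: scale_def)
    then have "0 \<le> real_of_int (ceil_div scale (int p * (int p - 1)))"
      using ceil_div_ge[OF pos, of scale] by linarith
    with prime_imp_small_prime_free ceil_div_ge[OF pos, of scale]
    show "prime_weight p \<le> real_of_int (prime_weight_ceil (int p)) / of_int scale"
      using p by (auto simp: prime_weight_def prime_weight_ceil_def)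
  qed
  also have "\<dots> = real_of_int (\<Sum>n\<leftarrow>[31..500]. prime_weight_ceil n) / of_int scale"
  proof -
    have img: "int ` {31..<501} = {31..500}"
      unfolding image_int_atLeastLessThan by auto
    have "(\<Sum>p\<in>{31..<501::nat}. prime_weight_ceil (int p)) = (\<Sum>n\<in>int ` {31..<501}. prime_weight_ceil n)"
      by (simp add: sum.reindex)
    also have "\<dots> = (\<Sum>n\<leftarrow>[31..500]. prime_weight_ceil n)"
      unfolding img by (simp only: interv_sum_list_conv_sum_set_int set_upto)
    finally show ?thesis
      by (simp add: sum_divide_distrib[symmetric] del: upto_rec_numeral flip: of_int_sum)
  qed
  finally show ?thesis .
qed

lemma sum_prime_weight_le_above_501: "(\<Sum>p\<in>{501..<n}. prime_weight p) \<le> 1 / 998"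
proof -
  define g where "g i = (if odd i then 1 / (2 * (real i - 2)) else 1 / (2 * (real i - 1)))" for i
  have "(\<Sum>p\<in>{501..<n}. prime_weight p) \<le> g 501"
  proof (rule sum_le_telescope)
    fix i :: nat
    assume i: "501 \<le> i"
    show "prime_weight i \<le> g i - g (Suc i)"
    proof (cases "prime i")
      case True
      then have "odd i" using i prime_odd_nat by simp
      moreover have "1 / (real i * (real i - 1)) \<le> 1 / (real i * (real i - 2))"
        using i by (intro divide_left_mono mult_left_mono) auto
      moreover have "1 / (real i * (real i - 2)) = 1 / (2 * (real i - 2)) - 1 / (2 * real i)"
        using i by (simp add: field_simps)
      ultimately show ?thesis using True by (simp add: prime_weight_def g_def)
    next
      case False
      have "1 / (2 * real i) \<le> 1 / (2 * (real i - 2))"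
        using i by (intro divide_left_mono) auto
      then show ?thesis using False by (simp add: prime_weight_def g_def)
    qed
  qed (simp add: g_def)
  then show ?thesis by (simp add: g_def)
qed

lemma sum_prime_weight_le:
  assumes "prime_tail_upper \<le> t"
  shows "(\<Sum>p\<in>{31..<n}. prime_weight p) \<le> real_of_int t / of_int scale"
proof -
  define N where "N = max n 501"
  have "(\<Sum>p\<in>{31..<n}. prime_weight p) \<le> (\<Sum>p\<in>{31..<N}. prime_weight p)"
    by (rule sum_mono2) (auto simp: N_def prime_weight_nonneg)
  also have "\<dots> = (\<Sum>p\<in>{31..<501}. prime_weight p) + (\<Sum>p\<in>{501..<N}. prime_weight p)"
    by (rule sum.atLeastLessThan_concat[symmetric]) (auto simp: N_def)
  also have "\<dots> \<le> real_of_int prime_tail_upper / of_int scale"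
    using add_mono[OF sum_prime_weight_le_below_501 sum_prime_weight_le_above_501[of N]]
      ceil_div_ge[of 998 scale]
    by (simp add: prime_tail_upper_def add_divide_distrib del: upto_rec_numeral)
  also have "\<dots> \<le> real_of_int t / of_int scale"
    using assms by (simp add: divide_right_mono)
  finally show ?thesis .
qed

subsection \<open>Bounding \<open>\<lambda>\<close>\<close>

lemma suminf_prime_alpha_le:
  assumes "prime_tail_upper \<le> t"
  shows "(\<Sum>p. if prime p then alpha p else 0)
           \<le> (\<Sum>p\<leftarrow>small_primes. alpha p) + real_of_int t / of_int scale"
proof -
  define F where "F = (\<lambda>p. if prime p then alpha p else 0)"
  have F_nonneg: "0 \<le> F p" for p
    using alpha_nonneg prime_ge_2_nat by (simp add: F_def)
  have partial: "sum F {..<n} \<le> (\<Sum>p\<leftarrow>small_primes. alpha p) + real_of_int t / of_int scale" for n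
  proof -
    define N where "N = max n 31"
    have "sum F {..<n} \<le> sum F {..<N}"
      by (rule sum_mono2) (auto simp: N_def F_nonneg)
    also have "\<dots> = sum F {..<31} + (\<Sum>p\<in>{31..<N}. F p)"
      unfolding lessThan_atLeast0 by (rule sum.atLeastLessThan_concat[symmetric]) (auto simp: N_def)
    moreover have "sum F {..<31} = sum F (set small_primes)"
      by (rule sum.mono_neutral_right)
         (auto simp: F_def small_primes_def dest: prime_below_31_in_small_primes)
    moreover have "sum F (set small_primes) \<le> (\<Sum>p\<leftarrow>small_primes. alpha p)"
      unfolding sum_list_distinct_conv_sum_set[OF distinct_small_primes]
      by (intro sum_mono) (auto simp: F_def alpha_nonneg small_primes_ge_2)
    moreover have "(\<Sum>p\<in>{31..<N}. F p) \<le> (\<Sum>p\<in>{31..<N}. prime_weight p)"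
      by (intro sum_mono) (auto simp: F_def prime_weight_def alpha_le_reciprocal prime_ge_2_nat)
    moreover have "(\<Sum>p\<in>{31..<N}. prime_weight p) \<le> real_of_int t / of_int scale"
      by (rule sum_prime_weight_le[OF assms])
    ultimately show ?thesis by linarith
  qed
  show ?thesis
    using suminf_le_const[OF summableI_nonneg_bounded[OF F_nonneg partial] partial]
    unfolding F_def .
qed

lemma beta_prodinf_factor_bounds:
  "0 < (if prime p \<and> p \<ge> 3 then beta j p else 1)"
  "(if prime p \<and> p \<ge> 3 then beta j p else 1) \<le> 1"
  "1 - (if prime p \<and> p \<ge> 3 then beta j p else 1) \<le> real j * prime_weight p"
  using beta_pos[of p j] beta_le_1[of p j] one_minus_beta_le[of p j]
    mult_nonneg_nonneg[OF of_nat_0_le_iff prime_weight_nonneg, of j p]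
  by (auto simp: prime_weight_def)

lemma beta_prodinf_bounds:
  "0 \<le> (\<Prod>p. if prime p \<and> p \<ge> 3 then beta j p else 1)"
  "(\<Prod>p. if prime p \<and> p \<ge> 3 then beta j p else 1) \<le> 1"
proof -
  define f where "f = (\<lambda>p. if prime p \<and> p \<ge> 3 then beta j p else 1)"
  define a where "a = 2 * j + 2"
  have "(\<Sum>i\<in>{a..<n}. 1 - f i) \<le> real j / (real a - 1)" for n
  proof -
    have "(\<Sum>i\<in>{a..<n}. 1 - f i) \<le> (\<Sum>i\<in>{a..<n}. real j / (real i * (real i - 1)))"
    proof (rule sum_mono)
      fix i assume "i \<in> {a..<n}"
      then have "real i \<ge> 2" by (simp add: a_def)
      then have "real j * prime_weight i \<le> real j / (real i * (real i - 1))"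
        by (auto simp: prime_weight_def)
      then show "1 - f i \<le> real j / (real i * (real i - 1))"
        using beta_prodinf_factor_bounds(3)[of i j] by (simp add: f_def)
    qed
    also have "\<dots> \<le> real j / (real a - 1)"
    proof (rule sum_le_telescope)
      fix i assume "a \<le> i"
      then have "real i \<ge> 2" by (simp add: a_def)
      then show "real j / (real i * (real i - 1)) \<le> real j / (real i - 1) - real j / (real (Suc i) - 1)"
        by (simp add: field_simps)
    qed (simp add: a_def)
    finally show ?thesis .
  qed
  moreover have "real j / (real a - 1) < 1" by (simp add: a_def)
  ultimately have "(\<Prod>i<a. f i) * (1 - real j / (real a - 1)) \<le> prodinf f" "prodinf f \<le> 1"
    using prodinf_ge_tail_sum[of f a] beta_prodinf_factor_bounds[of _ j] by (auto simp: f_def)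
  moreover have "0 \<le> (\<Prod>i<a. f i) * (1 - real j / (real a - 1))"
    using beta_prodinf_factor_bounds(1)[of _ j] \<open>real j / (real a - 1) < 1\<close>
    by (intro mult_nonneg_nonneg prod_nonneg) (auto simp: f_def less_imp_le)
  ultimately show "0 \<le> (\<Prod>p. if prime p \<and> p \<ge> 3 then beta j p else 1)"
    "(\<Prod>p. if prime p \<and> p \<ge> 3 then beta j p else 1) \<le> 1"
    by (simp_all add: f_def)
qed

lemma beta_prodinf_ge:
  assumes "prime_tail_upper \<le> t"
  shows "(\<Prod>p\<leftarrow>tl small_primes. beta j p) * max 0 (1 - real j * real_of_int t / of_int scale)
           \<le> (\<Prod>p. if prime p \<and> p \<ge> 3 then beta j p else 1)"
proof (cases "real j * real_of_int t / of_int scale < 1")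
  case False
  then show ?thesis using beta_prodinf_bounds(1)[of j] by simp
next
  case True
  define f where "f = (\<lambda>p. if prime p \<and> p \<ge> 3 then beta j p else 1)"
  define B where "B = real j * real_of_int t / of_int scale"
  have "(\<Sum>i\<in>{31..<n}. 1 - f i) \<le> B" for n
  proof -
    have "(\<Sum>i\<in>{31..<n}. 1 - f i) \<le> real j * (\<Sum>i\<in>{31..<n}. prime_weight i)"
      unfolding sum_distrib_left f_def by (intro sum_mono beta_prodinf_factor_bounds)
    also have "\<dots> \<le> B"
      using mult_left_mono[OF sum_prime_weight_le[OF assms, of n], of "real j"] by (simp add: B_def)
    finally show ?thesis .
  qed
  then have "(\<Prod>i<31. f i) * (1 - B) \<le> prodinf f"
    using prodinf_ge_tail_sum(1)[of f 31 B] beta_prodinf_factor_bounds[of _ j] True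
    by (auto simp: f_def B_def)
  moreover have "(\<Prod>i<31. f i) = (\<Prod>p\<in>set (tl small_primes). f p)"
    by (rule prod.mono_neutral_right)
       (auto simp: f_def small_primes_def dest: prime_below_31_in_small_primes)
  moreover have tl_small_primes: "distinct (tl small_primes)" "\<And>p. p \<in> set (tl small_primes) \<Longrightarrow> p \<ge> 2"
    using distinct_small_primes small_primes_ge_2 by (auto simp: small_primes_def)
  then have "(\<Prod>p\<leftarrow>tl small_primes. beta j p) \<le> (\<Prod>p\<in>set (tl small_primes). f p)"
    unfolding prod.distinct_set_conv_list[OF tl_small_primes(1), symmetric]
    by (intro prod_mono) (auto simp: f_def beta_le_1 less_imp_le[OF beta_pos])
  moreover have "0 \<le> (\<Prod>p\<leftarrow>tl small_primes. beta j p)"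
    unfolding prod.distinct_set_conv_list[OF tl_small_primes(1), symmetric]
    using tl_small_primes(2) by (auto intro: prod_nonneg less_imp_le[OF beta_pos])
  ultimately show ?thesis
    using True by (simp add: f_def B_def order_trans[OF mult_right_mono])
qed

definition lambda_series_term :: "nat \<Rightarrow> real" where
  "lambda_series_term j =
     1 / real j * ((2 * beta j 2 - 1) * (\<Prod>p. if prime p \<and> p \<ge> 3 then beta j p else 1))"

lemma lambda_const_eq:
  "lambda_const = alpha 2 + (\<Sum>p. if prime p then alpha p else 0) - (\<Sum>k. lambda_series_term (Suc k))"
  unfolding lambda_const_def lambda_series_term_def Let_def ..

lemma lambda_series_term_bounds:
  shows "0 \<le> lambda_series_term (Suc k)" and "lambda_series_term (Suc k) \<le> (2 / 3) ^ k"
proof -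
  define P where "P = (\<Prod>p. if prime p \<and> p \<ge> 3 then beta (Suc k) p else 1)"
  define X where "X = 2 * beta (Suc k) 2 - 1"
  have P: "0 \<le> P" "P \<le> 1"
    using beta_prodinf_bounds[of "Suc k"] by (simp_all add: P_def)
  have X: "0 \<le> X" "X \<le> (2 / 3) ^ Suc k"
    using beta_2_ge[of "Suc k"] beta_2_le[of "Suc k"] by (simp_all add: X_def)
  have "lambda_series_term (Suc k) = 1 / real (Suc k) * (X * P)"
    by (simp add: lambda_series_term_def P_def X_def)
  moreover have "1 / real (Suc k) * (X * P) \<le> 1 * (X * 1)"
    using P X by (intro mult_mono) auto
  moreover have "(2 / 3 :: real) ^ Suc k \<le> (2 / 3) ^ k"
    by (rule power_decreasing) auto
  ultimately show "0 \<le> lambda_series_term (Suc k)" and "lambda_series_term (Suc k) \<le> (2 / 3) ^ k"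
    using P X by simp_all
qed

lemma lambda_term_lower_le_series_term:
  assumes "prime_tail_upper \<le> t" "map fst ps = tl small_primes" "j \<ge> 1"
  shows "real_of_int (lambda_term_lower t j (beta_lower K j 2) (beta_prod_lower j ps))
           \<le> of_int scale * lambda_series_term j"
proof -
  have "\<forall>p\<in>fst ` set ps. p \<ge> 2"
    using arg_cong[OF assms(2), of set] small_primes_ge_2 by (auto simp: small_primes_def)
  from beta_prod_lower_le[OF this, of j] have "0 \<le> beta_prod_lower j ps"
    "real_of_int (beta_prod_lower j ps) \<le> of_int scale * (\<Prod>p\<leftarrow>tl small_primes. beta j p)"
    by (simp_all add: assms(2))
  with beta_lower_le[of 2 K j] beta_2_ge[of j] beta_prodinf_ge[OF assms(1), of j] assms(3)
  show ?thesis
    unfolding lambda_series_term_def by (intro lambda_term_lower_le) auto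
qed

lemma upt_1_Suc_eq_map_Suc: "[1..<Suc n] = map Suc [0..<n]"
  by (induction n) auto

lemma lambda_series_ge:
  assumes "prime_tail_upper \<le> t" "map fst ps = tl small_primes"
  shows "real_of_int (\<Sum>j\<leftarrow>[1..<Suc n]. lambda_term_lower t j (beta_lower K j 2) (beta_prod_lower j ps))
           / of_int scale \<le> (\<Sum>k. lambda_series_term (Suc k))"
proof -
  have "summable (\<lambda>k. lambda_series_term (Suc k))"
    by (rule summable_geometric_majorant[of _ 1 "2 / 3"]) (use lambda_series_term_bounds in auto)
  have "real_of_int (\<Sum>j\<leftarrow>[1..<Suc n]. lambda_term_lower t j (beta_lower K j 2) (beta_prod_lower j ps))
      = (\<Sum>k<n. real_of_int (lambda_term_lower t (Suc k) (beta_lower K (Suc k) 2) (beta_prod_lower (Suc k) ps)))"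
    unfolding upt_1_Suc_eq_map_Suc map_map o_def
    by (simp only: interv_sum_list_conv_sum_set_nat set_upt atLeast0LessThan of_int_sum)
  also have "\<dots> \<le> (\<Sum>k<n. of_int scale * lambda_series_term (Suc k))"
    using lambda_term_lower_le_series_term[OF assms] by (intro sum_mono) simp
  also have "\<dots> \<le> of_int scale * (\<Sum>k. lambda_series_term (Suc k))"
    using sum_le_suminf[OF \<open>summable _\<close>, of "{..<n}"] lambda_series_term_bounds(1)
    by (simp add: sum_distrib_left[symmetric])
  finally show ?thesis
    by (simp add: divide_le_eq mult.commute)
qed

lemma sum_list_zip_map:
  "(\<Sum>(x, y, z)\<leftarrow>zip xs (zip (map g xs) (map h xs)). f x y z) = (\<Sum>x\<leftarrow>xs. f x (g x) (h x))"
  by (induction xs) auto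

text \<open>A pair \<open>(p, K)\<close> truncates the series defining the local factor at \<open>p\<close> after \<open>K\<close> terms.\<close>

definition alpha_plan :: "(nat \<times> nat) list" where
  "alpha_plan = [(2, 10), (3, 6), (5, 4), (7, 3), (11, 2), (13, 2), (17, 2), (19, 2), (23, 2), (29, 2)]"

definition beta_plan :: "(nat \<times> nat) list" where
  "beta_plan = [(3, 4), (5, 3), (7, 2), (11, 2), (13, 2), (17, 2), (19, 2), (23, 2), (29, 2)]"

lemma beta_plan_primes: "map fst beta_plan = tl small_primes"
  by (simp add: beta_plan_def small_primes_def)

definition lambda_upper :: "nat \<Rightarrow> int \<Rightarrow> int" where
  "lambda_upper n t = alpha_upper 10 2 + (\<Sum>(p, K)\<leftarrow>alpha_plan. alpha_upper K p) + t
     - (\<Sum>(j, b, y)\<leftarrow>zip [1..<Suc n] (zip (beta_lower_list 6 2 n) (beta_prod_lower_list beta_plan n)).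
          lambda_term_lower t j b y)"

lemma lambda_upper_eq:
  "lambda_upper n t = alpha_upper 10 2 + (\<Sum>(p, K)\<leftarrow>alpha_plan. alpha_upper K p) + t
     - (\<Sum>j\<leftarrow>[1..<Suc n]. lambda_term_lower t j (beta_lower 6 j 2) (beta_prod_lower j beta_plan))"
  unfolding lambda_upper_def beta_lower_list_eq beta_prod_lower_list_eq sum_list_zip_map ..

lemma alpha_sum_le_alpha_upper:
  "alpha 2 + (\<Sum>p\<leftarrow>small_primes. alpha p)
     \<le> real_of_int (alpha_upper 10 2 + (\<Sum>(p, K)\<leftarrow>alpha_plan. alpha_upper K p)) / of_int scale"
proof -
  have "\<forall>p\<in>fst ` set alpha_plan. p \<ge> 2" "map fst alpha_plan = small_primes"
    by (auto simp: alpha_plan_def small_primes_def)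
  from add_mono[OF alpha_le_alpha_upper[of 2 10] sum_list_alpha_le_alpha_upper[OF this(1)]] this(2)
  show ?thesis
    by (simp add: field_simps)
qed

lemma lambda_const_le_lambda_upper:
  assumes "prime_tail_upper \<le> t"
  shows "lambda_const \<le> real_of_int (lambda_upper n t) / of_int scale"
  using suminf_prime_alpha_le[OF assms] alpha_sum_le_alpha_upper
    lambda_series_ge[OF assms beta_plan_primes, where n = n and K = 6]
  unfolding lambda_const_eq lambda_upper_eq of_int_add of_int_diff add_divide_distrib diff_divide_distrib
  by linarith

lemma prime_tail_upper_le: "prime_tail_upper \<le> 809996"
  by code_simp

lemma lambda_upper_le: "100 * lambda_upper 14 809996 < - 3 * scale"
  by code_simp

theorem corollary5p5:
  shows "lambda_const < - 0.030"
proof -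
  have "real_of_int (100 * lambda_upper 14 809996) < real_of_int (- 3 * scale)"
    using lambda_upper_le by linarith
  then have "real_of_int (lambda_upper 14 809996) / of_int scale < - 0.030"
    by simp
  then show ?thesis
    using lambda_const_le_lambda_upper[OF prime_tail_upper_le, of 14] by linarith
qed

end
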